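(* For every $d\ge 1$ there is a constant $C_d$ such that the following holds. Let $\sigma\in(0,1)$ and let $L$ be a finite set of closed line segments in $\mathbb{R}^d$ such that (i) $L$ is $\sigma$-exposed and (ii) $\bigcap_{s\in L} s\neq\emptyset$. Then $|L|\le C_d/\sigma^{d+2}$.
   Context: For sets $X, Y\subseteq\mathbb{R}^d$ and $\sigma>0$, $X$ $\sigma$-shadows $Y$ if $\max_{q\in Y} \mathrm{dist}(q, X) \le \sigma\cdot \mathrm{diam}(Y)$, where $\mathrm{dist}(q,X)=\min_{p\in X}\|q-p\|$. A set of objects is $\sigma$-exposed if no object in the set $\sigma$-shadows another (distinct) object of the set. *)

theory Defs
  imports "HOL-Analysis.Analysis"
begin

definition shadows :: "real \<Rightarrow> ('a::metric_space) set \<Rightarrow> 'a set \<Rightarrow> bool" where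
  "shadows \<sigma> X Y \<longleftrightarrow> (\<forall>q\<in>Y. infdist q X \<le> \<sigma> * diameter Y)"

definition exposed :: "real \<Rightarrow> ('a::metric_space) set set \<Rightarrow> bool" where
  "exposed \<sigma> L \<longleftrightarrow> (\<forall>X\<in>L. \<forall>Y\<in>L. X \<noteq> Y \<longrightarrow> \<not> shadows \<sigma> X Y)"

definition is_segment :: "('a::real_vector) set \<Rightarrow> bool" where
  "is_segment s \<longleftrightarrow> (\<exists>a b. a \<noteq> b \<and> s = closed_segment a b)"

end

theory Submission
  imports Defs
begin

text \<open>Write every segment through the common point p as [p - a u, p + b u] with
  \<open>\<parallel>u\<parallel> = 1\<close>, and put it into a cell according to its direction u and its split ratio
  a / (a + b), both quantized with mesh \<sigma> / (d + 1). In one cell the directions and split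
  ratios nearly agree, so each endpoint of the shorter segment lies within \<sigma> times its length
  of the longer one, and by convexity so does the whole shorter segment: the longer one
  \<sigma>-shadows it. Exposedness therefore puts at most one segment in each cell, and there are
  only O(1/\<sigma>)^(d+1) cells.\<close>

lemma add_scaleR_mem_closed_segment:
  fixes p u :: "'a::real_vector"
  assumes "-\<alpha> \<le> s" "s \<le> \<beta>" "0 < \<alpha> + \<beta>"
  shows "p + s *\<^sub>R u \<in> closed_segment (p - \<alpha> *\<^sub>R u) (p + \<beta> *\<^sub>R u)"
proof -
  define r where "r = (s + \<alpha>) / (\<alpha> + \<beta>)"
  have r: "0 \<le> r" "r \<le> 1" using assms by (auto simp: r_def field_simps)
  have "r * (\<alpha> + \<beta>) - \<alpha> = s" using assms by (simp add: r_def)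
  hence "(1 - r) *\<^sub>R (p - \<alpha> *\<^sub>R u) + r *\<^sub>R (p + \<beta> *\<^sub>R u) = p + s *\<^sub>R u"
    by (simp add: algebra_simps) (metis scaleR_left.add scaleR_left_diff_distrib add.commute)
  thus ?thesis using r unfolding closed_segment_def
    by (intro CollectI exI[of _ r]) simp
qed

lemma segment_through_point:
  fixes s :: "'a::real_normed_vector set"
  assumes "is_segment s" "p \<in> s"
  obtains u a b where "norm u = 1" "0 \<le> a" "0 \<le> b" "0 < a + b"
    "s = closed_segment (p - a *\<^sub>R u) (p + b *\<^sub>R u)"
proof -
  obtain x y where "x \<noteq> y" and s: "s = closed_segment x y"
    using assms(1) is_segment_def by blast
  then obtain r where r: "0 \<le> r" "r \<le> 1" "p = (1 - r) *\<^sub>R x + r *\<^sub>R y"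
    using assms(2) unfolding closed_segment_def by blast
  define l where "l = norm (y - x)"
  define u where "u = (1 / l) *\<^sub>R (y - x)"
  have l: "0 < l" using \<open>x \<noteq> y\<close> by (simp add: l_def)
  have lu: "l *\<^sub>R u = y - x" using l by (simp add: u_def)
  have "p - (r * l) *\<^sub>R u = x" "p + ((1 - r) * l) *\<^sub>R u = y"
    by (simp_all add: r(3) lu flip: scaleR_scaleR) (simp_all add: algebra_simps)
  moreover have "norm u = 1" using l by (simp add: u_def l_def)
  ultimately show thesis
    using that[of u "r * l" "(1 - r) * l"] r l s by (simp add: algebra_simps)
qed

lemma infdist_closed_segment_le:
  fixes a b :: "'a::real_normed_vector"
  assumes "convex X" "xa \<in> X" "xb \<in> X" "dist a xa \<le> D" "dist b xb \<le> D"
    and "q \<in> closed_segment a b"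
  shows "infdist q X \<le> D"
proof -
  obtain r where r: "0 \<le> r" "r \<le> 1" "q = (1 - r) *\<^sub>R a + r *\<^sub>R b"
    using assms(6) unfolding closed_segment_def by blast
  let ?x = "(1 - r) *\<^sub>R xa + r *\<^sub>R xb"
  have "?x \<in> X" using convexD[OF assms(1-3), of "1 - r" r] r by simp
  have "q - ?x = (1 - r) *\<^sub>R (a - xa) + r *\<^sub>R (b - xb)"
    using r(3) by (simp add: algebra_simps)
  hence "dist q ?x \<le> (1 - r) * dist a xa + r * dist b xb"
    using r by (metis dist_norm norm_triangle_ineq abs_of_nonneg diff_ge_0_iff_ge norm_scaleR)
  also have "\<dots> \<le> (1 - r) * D + r * D"
    using r assms(4,5) by (intro add_mono mult_left_mono) auto
  finally show ?thesis using infdist_le[OF \<open>?x \<in> X\<close>, of q] by (simp add: algebra_simps)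
qed

lemma dist_le_diameter_closed_segment:
  fixes a b :: "'a::real_normed_vector"
  shows "dist a b \<le> diameter (closed_segment a b)"
  by (intro diameter_bounded_bound compact_imp_bounded compact_segment) auto

lemma shadows_closed_segmentI:
  fixes a b :: "'a::real_normed_vector"
  assumes "convex X" "xa \<in> X" "xb \<in> X" "0 \<le> \<sigma>"
    and "dist a xa \<le> \<sigma> * dist a b" "dist b xb \<le> \<sigma> * dist a b"
  shows "shadows \<sigma> X (closed_segment a b)"
proof -
  have "\<sigma> * dist a b \<le> \<sigma> * diameter (closed_segment a b)"
    by (intro mult_left_mono dist_le_diameter_closed_segment assms(4))
  thus ?thesis
    unfolding shadows_def using infdist_closed_segment_le[OF assms(1-3,5,6)] by force
qed

lemma nearby_ray_point_near_segment:
  fixes p u v :: "'a::real_normed_vector"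
  assumes "norm v = 1" "norm (v - u) \<le> e" "0 \<le> e" "0 \<le> k"
    and "0 \<le> t" "t \<le> l" "0 \<le> a" "0 \<le> b" "0 < a + b" "t - k \<le> b"
  shows "\<exists>x\<in>closed_segment (p - a *\<^sub>R u) (p + b *\<^sub>R u). dist (p + t *\<^sub>R v) x \<le> k + l * e"
proof
  let ?c = "min t b"
  show "p + ?c *\<^sub>R u \<in> closed_segment (p - a *\<^sub>R u) (p + b *\<^sub>R u)"
    using assms by (intro add_scaleR_mem_closed_segment) auto
  have "p + t *\<^sub>R v - (p + ?c *\<^sub>R u) = (t - ?c) *\<^sub>R v + ?c *\<^sub>R (v - u)"
    by (simp add: algebra_simps)
  hence "dist (p + t *\<^sub>R v) (p + ?c *\<^sub>R u) \<le> \<bar>t - ?c\<bar> + ?c * norm (v - u)"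
    using assms(1,5,8) by (metis dist_norm norm_triangle_ineq norm_scaleR mult.right_neutral
        abs_of_nonneg min.boundedI)
  also have "\<dots> \<le> k + l * e"
    using assms by (intro add_mono mult_mono) auto
  finally show "dist (p + t *\<^sub>R v) (p + ?c *\<^sub>R u) \<le> k + l * e" .
qed

lemma lower_bound_of_close_ratios:
  fixes a b l m h :: real
  assumes "0 \<le> a" "0 < m" "m \<le> l" "\<bar>a / l - b / m\<bar> \<le> h"
  shows "b - h * m \<le> a"
proof -
  have "a = (a / l) * l" using assms by simp
  also have "\<dots> \<ge> (a / l) * m" using assms by (intro mult_left_mono) auto
  also have "(a / l) * m \<ge> (b / m - h) * m" using assms by (intro mult_right_mono) auto
  also have "(b / m - h) * m = b - h * m" using assms by (simp add: algebra_simps)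
  finally show ?thesis .
qed

lemma shadows_of_similar_segments:
  fixes p u1 u2 :: "'a::real_normed_vector"
  assumes "norm u1 = 1" "norm u2 = 1"
    and "0 \<le> a1" "0 \<le> b1" "0 \<le> a2" "0 \<le> b2" "0 < a2 + b2" "a2 + b2 \<le> a1 + b1"
    and "norm (u2 - u1) \<le> e" "\<bar>a1 / (a1 + b1) - a2 / (a2 + b2)\<bar> \<le> h"
    and "0 \<le> h" "0 \<le> e" "h + e \<le> \<sigma>"
  shows "shadows \<sigma> (closed_segment (p - a1 *\<^sub>R u1) (p + b1 *\<^sub>R u1))
                   (closed_segment (p - a2 *\<^sub>R u2) (p + b2 *\<^sub>R u2))"
proof -
  define X where "X = closed_segment (p - a1 *\<^sub>R u1) (p + b1 *\<^sub>R u1)"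
  define l where "l = a2 + b2"
  have "a2 - h * l \<le> a1"
    using assms by (intro lower_bound_of_close_ratios[where l = "a1 + b1"]) (auto simp: l_def)
  moreover have "b2 - h * l \<le> b1"
  proof (rule lower_bound_of_close_ratios[where l = "a1 + b1"])
    have "b1 / (a1 + b1) = 1 - a1 / (a1 + b1)" "b2 / l = 1 - a2 / l"
      using assms by (auto simp: l_def field_simps)
    thus "\<bar>b1 / (a1 + b1) - b2 / l\<bar> \<le> h" using assms(10) by (simp add: l_def)
  qed (use assms in \<open>auto simp: l_def\<close>)
  moreover have "norm (- u2 - - u1) \<le> e" using assms(9) by (simp add: norm_minus_commute)
  ultimately obtain xa xb where
      "xa \<in> X" "dist (p + a2 *\<^sub>R - u2) xa \<le> h * l + l * e"
      "xb \<in> X" "dist (p + b2 *\<^sub>R u2) xb \<le> h * l + l * e"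
    using nearby_ray_point_near_segment[of "-u2" "-u1" e "h * l" a2 l b1 a1 p]
      nearby_ray_point_near_segment[of u2 u1 e "h * l" b2 l a1 b1 p] assms
    unfolding X_def by (auto simp: l_def closed_segment_commute)
  moreover have "dist (p - a2 *\<^sub>R u2) (p + b2 *\<^sub>R u2) = l"
    using assms by (simp add: dist_norm l_def algebra_simps flip: scaleR_left_distrib)
  moreover have "h * l + l * e \<le> \<sigma> * l"
    using mult_right_mono[OF assms(13), of l] assms(7) by (simp add: l_def algebra_simps)
  ultimately show ?thesis
    unfolding X_def[symmetric] using assms(11,12,13)
    by (intro shadows_closed_segmentI[of X xa xb]) (auto simp: X_def)
qed

lemma abs_diff_lt_of_floor_divide_eq:
  fixes x y h :: real
  assumes "0 < h" "\<lfloor>x / h\<rfloor> = \<lfloor>y / h\<rfloor>"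
  shows "\<bar>x - y\<bar> < h"
proof -
  have "\<bar>x / h - y / h\<bar> < 1"
    using assms(2) floor_correct[of "x / h"] floor_correct[of "y / h"] by linarith
  thus ?thesis using assms(1) by (simp add: field_simps flip: diff_divide_distrib)
qed

lemma floor_divide_mem_Icc:
  fixes x h :: real
  assumes "0 < h" "\<bar>x\<bar> \<le> 1"
  shows "\<lfloor>x / h\<rfloor> \<in> {-\<lceil>1 / h\<rceil>..\<lceil>1 / h\<rceil>}"
proof -
  have "- (1 / h) \<le> x / h" "x / h \<le> 1 / h"
    using divide_right_mono[of "-1" x h] divide_right_mono[of x 1 h] assms by auto
  moreover have "1 / h \<le> of_int \<lceil>1 / h\<rceil>" by (rule le_of_int_ceiling)
  ultimately have "- of_int \<lceil>1 / h\<rceil> \<le> x / h" "x / h \<le> of_int \<lceil>1 / h\<rceil>" by linarith+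
  thus ?thesis by (auto simp: le_floor_iff floor_le_iff)
qed

lemma norm_diff_le_of_floor_components_eq:
  fixes u v :: "real ^ 'n" and h :: real
  assumes "0 < h" "\<And>i. \<lfloor>u $ i / h\<rfloor> = \<lfloor>v $ i / h\<rfloor>"
  shows "norm (u - v) \<le> CARD('n) * h"
proof -
  have "norm (u - v) \<le> (\<Sum>i\<in>UNIV. \<bar>(u - v) $ i\<bar>)" by (rule norm_le_l1_cart)
  also have "\<dots> \<le> (\<Sum>i\<in>(UNIV::'n set). h)"
    using abs_diff_lt_of_floor_divide_eq[OF assms] by (intro sum_mono) (simp add: less_imp_le)
  finally show ?thesis by simp
qed

lemma card_exposed_segments_through_point:
  fixes L :: "(real ^ 'd) set set"
  assumes "0 < \<sigma>" "\<forall>s\<in>L. is_segment s" "exposed \<sigma> L" "p \<in> \<Inter>L"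
  shows "card L \<le> nat (2 * \<lceil>(real CARD('d) + 1) / \<sigma>\<rceil> + 1) ^ (CARD('d) + 1)"
proof -
  obtain U A B where UAB: "\<And>s. s \<in> L \<Longrightarrow> norm (U s) = 1 \<and> 0 \<le> A s \<and> 0 \<le> B s \<and>
      0 < A s + B s \<and> s = closed_segment (p - A s *\<^sub>R U s) (p + B s *\<^sub>R U s)"
    using segment_through_point assms(2,4) by (metis InterE)
  define h where "h = \<sigma> / (real CARD('d) + 1)"
  define N where "N = \<lceil>1 / h\<rceil>"
  define f where "f s = ((\<lambda>i. \<lfloor>U s $ i / h\<rfloor>), \<lfloor>A s / (A s + B s) / h\<rfloor>)" for s
  define T where "T = (PiE UNIV (\<lambda>_::'d. {-N..N})) \<times> {-N..N}"
  have h: "0 < h" using assms(1) by (simp add: h_def)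
  have "f ` L \<subseteq> T"
  proof
    fix z assume "z \<in> f ` L"
    then obtain s where "s \<in> L" "z = f s" by blast
    moreover have "\<lfloor>U s $ i / h\<rfloor> \<in> {-N..N}" for i
      using component_le_norm_cart[of "U s" i] UAB[OF \<open>s \<in> L\<close>]
      unfolding N_def by (intro floor_divide_mem_Icc h) simp
    moreover have "\<lfloor>A s / (A s + B s) / h\<rfloor> \<in> {-N..N}"
      using UAB[OF \<open>s \<in> L\<close>] unfolding N_def by (intro floor_divide_mem_Icc h) simp
    ultimately show "z \<in> T" by (simp add: f_def T_def PiE_iff)
  qed
  moreover have shadow: "shadows \<sigma> X Y"
    if "X \<in> L" "Y \<in> L" "f X = f Y" "A Y + B Y \<le> A X + B X" for X Y
  proof -
    have "norm (U Y - U X) \<le> CARD('d) * h"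
      using \<open>f X = f Y\<close>
      by (intro norm_diff_le_of_floor_components_eq h) (simp add: f_def fun_eq_iff)
    moreover have "\<bar>A X / (A X + B X) - A Y / (A Y + B Y)\<bar> \<le> h"
      using \<open>f X = f Y\<close> unfolding f_def
      by (intro less_imp_le abs_diff_lt_of_floor_divide_eq h) simp
    moreover have "h + CARD('d) * h = \<sigma>"
    proof -
      have "h + CARD('d) * h = (real CARD('d) + 1) * h" by (simp add: algebra_simps)
      also have "\<dots> = \<sigma>" by (simp add: h_def)
      finally show ?thesis .
    qed
    ultimately show ?thesis
      using UAB[OF \<open>X \<in> L\<close>] UAB[OF \<open>Y \<in> L\<close>] that(4) h
      by (metis shadows_of_similar_segments order_refl less_imp_le of_nat_0_le_iff
          zero_le_mult_iff)
  qed
  have "inj_on f L"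
  proof (rule inj_onI, rule ccontr)
    fix X Y assume "X \<in> L" "Y \<in> L" "f X = f Y" "X \<noteq> Y"
    thus False
      using shadow[of X Y] shadow[of Y X] assms(3) unfolding exposed_def
      by (metis linorder_le_cases)
  qed
  moreover have "finite T" unfolding T_def by (intro finite_cartesian_product finite_PiE) auto
  ultimately have "card L \<le> card T" by (intro card_inj_on_le)
  also have "card T = nat (2 * N + 1) ^ (CARD('d) + 1)"
    unfolding T_def by (simp add: card_cartesian_product card_PiE)
  finally show ?thesis by (simp add: N_def h_def add.commute)
qed

lemma grid_size_le:
  fixes \<sigma> :: real
  assumes "0 < \<sigma>" "\<sigma> \<le> 1"
  shows "real (nat (2 * \<lceil>(real d + 1) / \<sigma>\<rceil> + 1) ^ (d + 1))
           \<le> (2 * real d + 5) ^ (d + 1) / \<sigma> ^ (d + 2)"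
proof -
  define N where "N = \<lceil>(real d + 1) / \<sigma>\<rceil>"
  have "0 \<le> (real d + 1) / \<sigma>" using assms by simp
  hence N: "0 \<le> N" unfolding N_def by simp
  have "2 * of_int N + 1 < 2 * ((real d + 1) / \<sigma>) + 3"
    using ceiling_correct[of "(real d + 1) / \<sigma>"] unfolding N_def by linarith
  also have "3 \<le> 3 / \<sigma>" using assms by (simp add: field_simps)
  finally have N_le: "2 * of_int N + 1 \<le> (2 * real d + 5) / \<sigma>" by (simp add: add_divide_distrib)
  have "real (nat (2 * N + 1) ^ (d + 1)) = (2 * of_int N + 1) ^ (d + 1)" using N by simp
  also have "\<dots> \<le> ((2 * real d + 5) / \<sigma>) ^ (d + 1)"
    using N N_le by (intro power_mono) auto
  also have "\<dots> = (2 * real d + 5) ^ (d + 1) / \<sigma> ^ (d + 1)" by (rule power_divide)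
  also have "\<dots> \<le> (2 * real d + 5) ^ (d + 1) / \<sigma> ^ (d + 2)"
    using assms by (intro divide_left_mono power_decreasing) auto
  finally show ?thesis by (simp add: N_def)
qed

theorem mainTheorem6:
  shows "\<exists>C::real. \<forall>(\<sigma>::real) (L :: (real ^ 'd) set set).
           0 < \<sigma> \<and> \<sigma> < 1 \<and> finite L \<and> (\<forall>s\<in>L. is_segment s) \<and>
           exposed \<sigma> L \<and> \<Inter>L \<noteq> {}
           \<longrightarrow> real (card L) \<le> C / \<sigma> ^ (CARD('d) + 2)"
proof (intro exI allI impI)
  fix \<sigma> :: real and L :: "(real ^ 'd) set set"
  assume "0 < \<sigma> \<and> \<sigma> < 1 \<and> finite L \<and> (\<forall>s\<in>L. is_segment s) \<and> exposed \<sigma> L \<and> \<Inter>L \<noteq> {}"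
  then obtain p where "0 < \<sigma>" "\<sigma> < 1" "\<forall>s\<in>L. is_segment s" "exposed \<sigma> L" "p \<in> \<Inter>L"
    by blast
  hence "real (card L) \<le> real (nat (2 * \<lceil>(real CARD('d) + 1) / \<sigma>\<rceil> + 1) ^ (CARD('d) + 1))"
    by (metis card_exposed_segments_through_point of_nat_le_iff)
  also have "\<dots> \<le> (2 * real CARD('d) + 5) ^ (CARD('d) + 1) / \<sigma> ^ (CARD('d) + 2)"
    using \<open>0 < \<sigma>\<close> \<open>\<sigma> < 1\<close> by (intro grid_size_le) auto
  finally show "real (card L) \<le> (2 * real CARD('d) + 5) ^ (CARD('d) + 1) / \<sigma> ^ (CARD('d) + 2)" .
qed

end
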